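(* Let $G$ be a weighted finite graph, $F:V\to\mathbb{R}^k$ a map, $S\subseteq V$, and $0<\epsilon<2$. Define $\theta:V\to\mathbb{R}$ by $\theta(v)=0$ if $F(v)=0$ and $\theta(v)=\max\{0,1-\overline{d}_F(v,S\cap\widetilde{V}_F)/\epsilon\}$ otherwise, and set $\Psi:=\theta\cdot F:V\to\mathbb{R}^k$. Then for every edge $\{u,v\}\in E$, \[ \|\Psi(u)+\Psi(v)\|\leq\left(1+\frac{2}{\epsilon}\right)\|F(u)+F(v)\|. \]
   Context: $G=(V,E,w)$ is a finite undirected graph without self-loops with positive symmetric edge weights. $\|\cdot\|$ is the Euclidean norm on $\mathbb{R}^k$. $\widetilde{V}_F:=\{v\in V:F(v)\neq0\}$ and for $u,v\in\widetilde{V}_F$, \[ \overline{d}_F(u,v):=\min\left\{\left\|\tfrac{F(u)}{\|F(u)\|}-\tfrac{F(v)}{\|F(v)\|}\right\|,\left\|\tfrac{F(u)}{\|F(u)\|}+\tfrac{F(v)}{\|F(v)\|}\right\|\right\}; \] for $T\subseteq\widetilde{V}_F$, $\overline{d}_F(v,T):=\inf_{t\in T}\overline{d}_F(v,t)$ (with the convention $\inf\emptyset=+\infty$). *)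

theory Defs
  imports "HOL-Analysis.Analysis"
begin

text \<open>Weighted finite undirected graph without self-loops, positive symmetric weights.
  Edges are stored as ordered pairs in a symmetric relation.\<close>
definition weighted_graph :: "'v set \<Rightarrow> ('v \<times> 'v) set \<Rightarrow> ('v \<Rightarrow> 'v \<Rightarrow> real) \<Rightarrow> bool" where
  "weighted_graph V E w \<longleftrightarrow> finite V \<and> E \<subseteq> V \<times> V
     \<and> (\<forall>u v. (u, v) \<in> E \<longrightarrow> (v, u) \<in> E)
     \<and> (\<forall>v. (v, v) \<notin> E)
     \<and> (\<forall>u v. (u, v) \<in> E \<longrightarrow> w u v > 0 \<and> w u v = w v u)"

definition Vtilde :: "'v set \<Rightarrow> ('v \<Rightarrow> real ^ 'k) \<Rightarrow> 'v set" where
  "Vtilde V F = {v \<in> V. F v \<noteq> 0}"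

definition dbar :: "('v \<Rightarrow> real ^ 'k) \<Rightarrow> 'v \<Rightarrow> 'v \<Rightarrow> real" where
  "dbar F u v = min (norm (F u /\<^sub>R norm (F u) - F v /\<^sub>R norm (F v)))
                    (norm (F u /\<^sub>R norm (F u) + F v /\<^sub>R norm (F v)))"

text \<open>Distance to a set, with inf of the empty set = +infinity (hence valued in ereal).\<close>
definition dbar_set :: "('v \<Rightarrow> real ^ 'k) \<Rightarrow> 'v \<Rightarrow> 'v set \<Rightarrow> ereal" where
  "dbar_set F v T = (INF t\<in>T. ereal (dbar F v t))"

definition theta :: "'v set \<Rightarrow> ('v \<Rightarrow> real ^ 'k) \<Rightarrow> 'v set \<Rightarrow> real \<Rightarrow> 'v \<Rightarrow> real" where
  "theta V F S eps v = (if F v = 0 then 0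
     else real_of_ereal (max 0 (1 - dbar_set F v (S \<inter> Vtilde V F) / ereal eps)))"

definition Psi :: "'v set \<Rightarrow> ('v \<Rightarrow> real ^ 'k) \<Rightarrow> 'v set \<Rightarrow> real \<Rightarrow> 'v \<Rightarrow> real ^ 'k" where
  "Psi V F S eps v = theta V F S eps v *\<^sub>R F v"

end

theory Submission
  imports Defs
begin

text \<open>Up to sign, the normalised vectors \<open>F v / \<parallel>F v\<parallel>\<close> form a pseudometric space, and
  \<open>\<theta>\<close> is a truncation of \<open>1 - d(\<cdot>, S)/\<epsilon>\<close>, hence \<open>1/\<epsilon>\<close>-Lipschitz for \<open>d\<close>. Writing
  \<open>\<Psi>(u) + \<Psi>(v) = \<theta>(v)(F u + F v) + (\<theta>(u) - \<theta>(v)) F u\<close>, the first term is at most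
  \<open>\<parallel>F u + F v\<parallel>\<close>, and the second at most \<open>d(u,v)\<parallel>F u\<parallel>/\<epsilon>\<close>; finally
  \<open>\<parallel>F u\<parallel> \<cdot> \<parallel>F u/\<parallel>F u\<parallel> + F v/\<parallel>F v\<parallel>\<parallel> \<le> 2\<parallel>F u + F v\<parallel>\<close>. If \<open>F v = 0\<close>, the
  second term is instead bounded via \<open>\<theta> \<le> 1 \<le> 2/\<epsilon>\<close>, which is where \<open>\<epsilon> < 2\<close> enters.\<close>

lemma min_norm_diff_add_triangle:
  fixes a b c :: "'a::real_normed_vector"
  shows "min (norm (a - c)) (norm (a + c))
    \<le> min (norm (a - b)) (norm (a + b)) + min (norm (b - c)) (norm (b + c))"
proof -
  have "norm (a - c) \<le> norm (a - b) + norm (b - c)"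
    using norm_triangle_ineq[of "a - b" "b - c"] by simp
  moreover have "norm (a + c) \<le> norm (a - b) + norm (b + c)"
    using norm_triangle_ineq[of "a - b" "b + c"] by (simp add: algebra_simps)
  moreover have "norm (a + c) \<le> norm (a + b) + norm (b - c)"
    using norm_triangle_ineq4[of "a + b" "b - c"] by (simp add: algebra_simps)
  moreover have "norm (a - c) \<le> norm (a + b) + norm (b + c)"
    using norm_triangle_ineq4[of "a + b" "b + c"] by (simp add: algebra_simps)
  ultimately show ?thesis by (simp add: min_def)
qed

lemma norm_mult_norm_add_normalized_le:
  fixes x y :: "'a::real_normed_vector"
  assumes "x \<noteq> 0" "y \<noteq> 0"
  shows "norm x * norm (x /\<^sub>R norm x + y /\<^sub>R norm y) \<le> 2 * norm (x + y)"
proof -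
  have pos: "norm x > 0" "norm y > 0" using assms by auto
  have "norm x *\<^sub>R (x /\<^sub>R norm x + y /\<^sub>R norm y)
      = (x + y) + ((norm x - norm y) / norm y) *\<^sub>R y"
    using pos by (simp add: algebra_simps diff_divide_distrib divide_inverse)
  then have "norm x * norm (x /\<^sub>R norm x + y /\<^sub>R norm y)
      = norm ((x + y) + ((norm x - norm y) / norm y) *\<^sub>R y)"
    by (metis abs_norm_cancel norm_scaleR)
  also have "\<dots> \<le> norm (x + y) + norm (((norm x - norm y) / norm y) *\<^sub>R y)"
    by (rule norm_triangle_ineq)
  also have "norm (((norm x - norm y) / norm y) *\<^sub>R y) = \<bar>norm x - norm y\<bar>"
    using pos by (simp add: abs_divide)
  also have "\<bar>norm x - norm y\<bar> \<le> norm (x + y)"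
    using norm_triangle_ineq3[of x "-y"] by simp
  finally show ?thesis by simp
qed

lemma norm_scaleR_add_scaleR_le:
  fixes x y :: "'a::real_normed_vector"
  assumes "0 \<le> b" "b \<le> 1"
  shows "norm (a *\<^sub>R x + b *\<^sub>R y) \<le> norm (x + y) + \<bar>a - b\<bar> * norm x"
proof -
  have "a *\<^sub>R x + b *\<^sub>R y = b *\<^sub>R (x + y) + (a - b) *\<^sub>R x"
    by (simp add: algebra_simps)
  then have "norm (a *\<^sub>R x + b *\<^sub>R y) \<le> b * norm (x + y) + \<bar>a - b\<bar> * norm x"
    using norm_triangle_ineq[of "b *\<^sub>R (x + y)" "(a - b) *\<^sub>R x"] assms by simp
  also have "b * norm (x + y) \<le> norm (x + y)"
    using assms by (simp add: mult_left_le_one_le)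
  finally show ?thesis by simp
qed

lemma dbar_nonneg: "0 \<le> dbar F u v"
  unfolding dbar_def by simp

lemma dbar_commute: "dbar F u v = dbar F v u"
  unfolding dbar_def by (simp add: norm_minus_commute add.commute)

lemma dbar_triangle: "dbar F u t \<le> dbar F u v + dbar F v t"
  unfolding dbar_def by (rule min_norm_diff_add_triangle)

lemma dbar_le_norm_add_normalized:
  "dbar F u v \<le> norm (F u /\<^sub>R norm (F u) + F v /\<^sub>R norm (F v))"
  unfolding dbar_def by simp

lemma dbar_set_real:
  assumes "T \<noteq> {}"
  obtains r where "0 \<le> r" "dbar_set F x T = ereal r"
proof -
  from assms obtain t where "t \<in> T" by blast
  then have "dbar_set F x T \<le> ereal (dbar F x t)"
    unfolding dbar_set_def by (rule INF_lower)
  moreover have "0 \<le> dbar_set F x T"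
    unfolding dbar_set_def by (rule INF_greatest) (simp add: dbar_nonneg)
  ultimately show ?thesis
    using that by (cases "dbar_set F x T") auto
qed

lemma dbar_set_le_add_dbar:
  assumes "dbar_set F a T = ereal ra" "dbar_set F b T = ereal rb"
  shows "ra \<le> rb + dbar F a b"
proof -
  have "ereal (ra - dbar F a b) \<le> dbar_set F b T"
    unfolding dbar_set_def
  proof (rule INF_greatest)
    fix t assume "t \<in> T"
    then have "ra \<le> dbar F a t"
      using assms(1) unfolding dbar_set_def by (metis INF_lower ereal_less_eq(3))
    then show "ereal (ra - dbar F a b) \<le> ereal (dbar F b t)"
      using dbar_triangle[of F a t b] by simp
  qed
  then show ?thesis using assms(2) by simp
qed

lemma theta_eq_0_if_no_targets:
  assumes "S \<inter> Vtilde V F = {}" "0 < eps"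
  shows "theta V F S eps x = 0"
  using assms by (simp add: theta_def dbar_set_def top_ereal_def one_ereal_def max_def)

lemma theta_eq_max:
  assumes "F x \<noteq> 0" "0 < eps" "dbar_set F x (S \<inter> Vtilde V F) = ereal r"
  shows "theta V F S eps x = max 0 (1 - r / eps)"
proof -
  have "1 - ereal r / ereal eps = ereal (1 - r / eps)"
    using assms(2) by (simp add: divide_ereal_def divide_inverse one_ereal_def)
  moreover have "real_of_ereal (max 0 (ereal z)) = max 0 z" for z
    by (cases "0 \<le> z") (auto simp: max_def)
  ultimately show ?thesis
    using assms by (simp add: theta_def)
qed

lemma theta_bounds:
  assumes "0 < eps"
  shows "0 \<le> theta V F S eps x" "theta V F S eps x \<le> 1"
proof -
  have "0 \<le> theta V F S eps x \<and> theta V F S eps x \<le> 1"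
  proof (cases "S \<inter> Vtilde V F = {} \<or> F x = 0")
    case True
    then show ?thesis
      using theta_eq_0_if_no_targets[of S V F eps x] assms by (auto simp: theta_def)
  next
    case False
    then have "S \<inter> Vtilde V F \<noteq> {}" by blast
    then obtain r where "0 \<le> r" "dbar_set F x (S \<inter> Vtilde V F) = ereal r"
      by (rule dbar_set_real)
    with False assms show ?thesis
      by (simp add: theta_eq_max max_def)
  qed
  then show "0 \<le> theta V F S eps x" "theta V F S eps x \<le> 1" by auto
qed

lemma theta_lipschitz:
  assumes "0 < eps" "F u \<noteq> 0" "F v \<noteq> 0"
  shows "\<bar>theta V F S eps u - theta V F S eps v\<bar> \<le> dbar F u v / eps"
proof (cases "S \<inter> Vtilde V F = {}")
  case True
  then show ?thesis
    using assms theta_eq_0_if_no_targets[OF True assms(1)] by (simp add: dbar_nonneg)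
next
  case False
  obtain ru where ru: "dbar_set F u (S \<inter> Vtilde V F) = ereal ru"
    using False by (rule dbar_set_real)
  obtain rv where rv: "dbar_set F v (S \<inter> Vtilde V F) = ereal rv"
    using False by (rule dbar_set_real)
  have "\<bar>rv - ru\<bar> \<le> dbar F u v"
    using dbar_set_le_add_dbar[OF ru rv] dbar_set_le_add_dbar[OF rv ru] dbar_commute[of F u v]
    by linarith
  moreover have "(1 - ru / eps) - (1 - rv / eps) = (rv - ru) / eps"
    by (simp add: diff_divide_distrib)
  ultimately have "\<bar>(1 - ru / eps) - (1 - rv / eps)\<bar> \<le> dbar F u v / eps"
    using assms(1) by (simp add: abs_divide divide_right_mono)
  moreover have "\<bar>max 0 a - max 0 b\<bar> \<le> \<bar>a - b\<bar>" for a b :: real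
    by (simp add: max_def abs_if)
  ultimately show ?thesis
    unfolding theta_eq_max[OF assms(2,1) ru] theta_eq_max[OF assms(3,1) rv] by (meson order_trans)
qed

lemma theta_diff_mult_norm_le:
  assumes "0 < eps" "eps < 2"
  shows "\<bar>theta V F S eps u - theta V F S eps v\<bar> * norm (F u) \<le> 2 / eps * norm (F u + F v)"
proof -
  consider "F u = 0" | "F u \<noteq> 0" "F v = 0" | "F u \<noteq> 0" "F v \<noteq> 0" by blast
  then show ?thesis
  proof cases
    case 1
    then show ?thesis using assms by simp
  next
    case 2
    have "theta V F S eps u * norm (F u) \<le> 1 * norm (F u)"
      using theta_bounds[OF assms(1)] by (intro mult_right_mono) auto
    also have "\<dots> \<le> 2 / eps * norm (F u)"
      using assms by (intro mult_right_mono) (auto simp: field_simps)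
    finally show ?thesis
      using 2 theta_bounds[OF assms(1)] by (simp add: theta_def)
  next
    case 3
    let ?n = "norm (F u /\<^sub>R norm (F u) + F v /\<^sub>R norm (F v))"
    have "\<bar>theta V F S eps u - theta V F S eps v\<bar> * norm (F u) \<le> ?n / eps * norm (F u)"
      using theta_lipschitz[where F = F and u = u and v = v and V = V and S = S, OF assms(1) 3]
      dbar_le_norm_add_normalized[of F u v] assms(1)
      by (intro mult_right_mono) (auto dest: divide_right_mono[of _ _ eps])
    also have "\<dots> = norm (F u) * ?n / eps" by simp
    also have "\<dots> \<le> 2 * norm (F u + F v) / eps"
      using norm_mult_norm_add_normalized_le[OF 3] assms(1) by (simp add: divide_right_mono)
    finally show ?thesis by simp
  qed
qed

theorem lemma5p3:
  fixes V :: "'v set" and E :: "('v \<times> 'v) set" and w :: "'v \<Rightarrow> 'v \<Rightarrow> real"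
    and F :: "'v \<Rightarrow> real ^ 'k" and S :: "'v set" and eps :: real
  assumes "weighted_graph V E w"
    and "S \<subseteq> V"
    and "0 < eps" and "eps < 2"
    and "(u, v) \<in> E"
  shows "norm (Psi V F S eps u + Psi V F S eps v) \<le> (1 + 2 / eps) * norm (F u + F v)"
proof -
  have "norm (Psi V F S eps u + Psi V F S eps v)
      \<le> norm (F u + F v) + \<bar>theta V F S eps u - theta V F S eps v\<bar> * norm (F u)"
    unfolding Psi_def using theta_bounds[OF assms(3)] by (rule norm_scaleR_add_scaleR_le)
  also have "\<dots> \<le> norm (F u + F v) + 2 / eps * norm (F u + F v)"
    using theta_diff_mult_norm_le[OF assms(3,4)] by simp
  finally show ?thesis by (simp add: algebra_simps)
qed

end
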